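(* Let $n$ be a nonnegative integer and $a,b\in\mathbb{C}$ such that all expressions below are defined (no lower parameter zero or a negative integer). Then \[ \left[{}_3F_2\!\left(\left.{-\frac{b}{2}-n,\frac{1-b}{2}-n,-a-2n \atop -b-2n,1-b-n}\right| 4\right)\right]_n =\frac{(-1)^n(1+a)_{2n}}{n!\,(1+a)_n}\,{}_4F_3\!\left(\left.{-n,\frac{1+a-b}{2},\frac{2+a-b}{2},1 \atop 1+a-b,1-b-n,1+a+n}\right| 4\right). \]
   Context: For $a\in\mathbb{C}$, $(a)_0=1$ and $(a)_k=a(a+1)\cdots(a+k-1)$ for $k\ge1$. The hypergeometric series is ${}_rF_s\!\left(\left.{\alpha_1,\ldots,\alpha_r\atop \beta_1,\ldots,\beta_s}\right|z\right)=\sum_{k\ge0}\frac{(\alpha_1)_k\cdots(\alpha_r)_k}{k!(\beta_1)_k\cdots(\beta_s)_k}z^k$, with no lower parameter zero or a negative integer; it is a finite sum when an upper parameter is $-n$. The bracket $\left[{}_rF_s(\cdots|z)\right]_n$ denotes the sum of the first $n+1$ terms, $\sum_{k=0}^{n}\frac{(\alpha_1)_k\cdots(\alpha_r)_k}{k!(\beta_1)_k\cdots(\beta_s)_k}z^k$. *)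

theory Defs
  imports Complex_Main
begin

definition hyp_term :: "complex list \<Rightarrow> complex list \<Rightarrow> complex \<Rightarrow> nat \<Rightarrow> complex" where
  "hyp_term as bs z k =
     (\<Prod>a\<leftarrow>as. pochhammer a k) / (fact k * (\<Prod>b\<leftarrow>bs. pochhammer b k)) * z ^ k"

definition hypF :: "complex list \<Rightarrow> complex list \<Rightarrow> complex \<Rightarrow> complex" where
  "hypF as bs z = (\<Sum>k. hyp_term as bs z k)"

text \<open>Truncation [rFs(...|z)]_n: sum of the first n+1 terms.\<close>
definition hypF_trunc :: "complex list \<Rightarrow> complex list \<Rightarrow> complex \<Rightarrow> nat \<Rightarrow> complex" where
  "hypF_trunc as bs z n = (\<Sum>k\<le>n. hyp_term as bs z k)"

definition nonpos_integer :: "complex \<Rightarrow> bool" where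
  "nonpos_integer c \<longleftrightarrow> (\<exists>m::nat. c = - of_nat m)"

end

theory Submission
  imports Defs "HOL-Computational_Algebra.Formal_Power_Series"
begin

text \<open>
  Put c = 1-b-n, d = 1+a+n and x = -a-2n = 1-d-n. The duplication formula
  (y/2)_k ((y+1)/2)_k 4^k = (y)_2k = (y)_k (y+k)_k turns both sides into plain terminating sums;
  the left one becomes sum_k (x)_k/k! (c-n-1+k)_k/(c)_k. Expanding each ratio (c-n-1+k)_k/(c)_k
  by Chu-Vandermonde, exchanging the two summations over the triangle i+j \<le> n and summing the
  new inner sums by Chu-Vandermonde again yields sum_k (x)_(n-k)/(n-k)! (c-x-n+k)_k/(c)_k.
  Reflecting (x)_(n-k) produces the prefactor and the terms of the 4F3.
\<close>

lemma pochhammer_nonzero_if_not_nonpos_integer: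
  "\<not> nonpos_integer c \<Longrightarrow> pochhammer c k \<noteq> 0"
  unfolding nonpos_integer_def by (auto simp: pochhammer_eq_0_iff)

lemma hyp_term_duplication:
  fixes x :: complex
  assumes "pochhammer x k \<noteq> 0"
  shows "hyp_term (as @ [x / 2, (x + 1) / 2] @ cs) (x # bs) 4 k
       = hyp_term (as @ cs) bs 1 k * pochhammer (x + of_nat k) k"
proof -
  let ?P = "\<lambda>ps. \<Prod>p\<leftarrow>ps. pochhammer p k"
  have duplication: "pochhammer (x / 2) k * pochhammer ((x + 1) / 2) k * 4 ^ k
      = pochhammer x k * pochhammer (x + of_nat k) k"
  proof -
    have "(of_nat (2 ^ (2 * k)) :: complex) = 4 ^ k"
      by (simp add: power_mult)
    then have "pochhammer (x / 2) k * pochhammer ((x + 1) / 2) k * 4 ^ k = pochhammer x (2 * k)"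
      using pochhammer_double[of "x / 2" k] by (simp add: add_divide_distrib mult_ac)
    then show ?thesis
      by (simp add: mult_2 pochhammer_product')
  qed
  have "hyp_term (as @ [x / 2, (x + 1) / 2] @ cs) (x # bs) 4 k
      = (pochhammer (x / 2) k * pochhammer ((x + 1) / 2) k * 4 ^ k) * (?P as * ?P cs)
        / (fact k * (pochhammer x k * ?P bs))"
    by (simp add: hyp_term_def mult_ac)
  also have "\<dots> = hyp_term (as @ cs) bs 1 k * pochhammer (x + of_nat k) k"
    unfolding duplication using assms by (simp add: hyp_term_def)
  finally show ?thesis .
qed

lemma hypF_terminating:
  assumes "- of_nat n \<in> set as"
  shows "hypF as bs z = hypF_trunc as bs z n"
  unfolding hypF_def hypF_trunc_def
proof (rule suminf_finite)
  fix k assume "k \<notin> {..n}"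
  then have "pochhammer (- of_nat n :: complex) k = 0"
    by (simp add: pochhammer_of_nat_eq_0_iff)
  then show "hyp_term as bs z k = 0"
    using assms unfolding hyp_term_def by (auto simp: prod_list_zero_iff)
qed simp

lemma chu_vandermonde_ratio:
  fixes a c :: "'a::field_char_0"
  assumes "pochhammer c m \<noteq> 0"
  shows "pochhammer (c - a) m / pochhammer c m
       = (\<Sum>i\<le>m. pochhammer a i * pochhammer (- of_nat m) i / (fact i * pochhammer c i))"
proof -
  have "\<forall>i \<in> {0..<m}. c \<noteq> - of_nat i"
    using assms by (auto simp: pochhammer_eq_0_iff)
  from Vandermonde_pochhammer[OF this, of a] show ?thesis
    by (simp add: atLeast0AtMost)
qed

lemma sum_triangle_swap:
  fixes h :: "nat \<Rightarrow> nat \<Rightarrow> 'a::comm_monoid_add"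
  shows "(\<Sum>k\<le>n. \<Sum>i\<le>k. h k i) = (\<Sum>j\<le>n. \<Sum>i\<le>n - j. h (i + j) i)"
proof -
  have "(\<Sum>k\<le>n. \<Sum>i\<le>k. h k i) = (\<Sum>(k, i)\<in>(SIGMA k:{..n}. {..k}). h k i)"
    by (rule sum.Sigma) auto
  also have "\<dots> = (\<Sum>(j, i)\<in>(SIGMA j:{..n}. {..n - j}). h (i + j) i)"
    by (rule sum.reindex_bij_witness[where i="\<lambda>(j, i). (i + j, i)" and j="\<lambda>(k, i). (k - i, i)"])
      auto
  also have "\<dots> = (\<Sum>j\<le>n. \<Sum>i\<le>n - j. h (i + j) i)"
    by (rule sum.Sigma[symmetric]) auto
  finally show ?thesis .
qed

lemma pochhammer_triangle_term:
  fixes x :: "'a::field_char_0"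
  assumes "i + j \<le> n"
  shows "pochhammer x j / fact j * (pochhammer (x + of_nat j) i * pochhammer (- of_nat (n - j)) i)
       = pochhammer x (i + j) / fact (i + j)
         * (pochhammer (of_nat (n - (i + j) + 1)) i * pochhammer (- of_nat (i + j)) i)"
proof -
  have fact_split: "(fact (i + j) :: 'a) = fact j * pochhammer (of_nat j + 1) i"
    using pochhammer_product'[of "1::'a" j i] by (simp add: pochhammer_fact add.commute)
  then have "pochhammer (of_nat j + 1 :: 'a) i \<noteq> 0"
    by (metis fact_nonzero mult_zero_right)
  moreover have "pochhammer (- of_nat (n - j) :: 'a) i
      = (-1) ^ i * pochhammer (of_nat (n - (i + j) + 1)) i"
    using assms pochhammer_minus[of "of_nat (n - j) :: 'a" i] by (simp add: of_nat_diff algebra_simps)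
  moreover have "pochhammer (- of_nat (i + j) :: 'a) i = (-1) ^ i * pochhammer (of_nat j + 1) i"
    using pochhammer_minus[of "of_nat (i + j) :: 'a" i] by simp
  moreover have "pochhammer x (i + j) = pochhammer x j * pochhammer (x + of_nat j) i"
    using pochhammer_product'[of x j i] by (simp add: add.commute)
  ultimately show ?thesis
    unfolding fact_split by (simp add: field_simps)
qed

lemma pochhammer_sum_transformation:
  fixes x c :: "'a::field_char_0"
  assumes "pochhammer c n \<noteq> 0"
  shows "(\<Sum>k\<le>n. pochhammer x k / fact k
            * (pochhammer (c - 1 - of_nat n + of_nat k) k / pochhammer c k))
       = (\<Sum>k\<le>n. pochhammer x (n - k) / fact (n - k)
            * (pochhammer (c - x - of_nat n + of_nat k) k / pochhammer c k))"
proof -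
  define t where "t k i = pochhammer x k / fact k
      * (pochhammer (of_nat (n - k + 1)) i * pochhammer (- of_nat k) i) / (fact i * pochhammer c i)"
    for k i
  have expand_left: "pochhammer (c - 1 - of_nat n + of_nat k) k / pochhammer c k
      = (\<Sum>i\<le>k. pochhammer (of_nat (n - k + 1)) i * pochhammer (- of_nat k) i
                    / (fact i * pochhammer c i))" if "k \<le> n" for k
    using chu_vandermonde_ratio[of c k "of_nat (n - k + 1)"] pochhammer_neq_0_mono[OF assms that] that
    by (simp add: of_nat_diff algebra_simps)
  have expand_right: "pochhammer (c - x - of_nat j) (n - j) / pochhammer c (n - j)
      = (\<Sum>i\<le>n - j. pochhammer (x + of_nat j) i * pochhammer (- of_nat (n - j)) i
                    / (fact i * pochhammer c i))" if "j \<le> n" for j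
    using chu_vandermonde_ratio[of c "n - j" "x + of_nat j"] pochhammer_neq_0_mono[OF assms]
    by (simp add: algebra_simps)
  have "(\<Sum>k\<le>n. pochhammer x k / fact k
            * (pochhammer (c - 1 - of_nat n + of_nat k) k / pochhammer c k))
      = (\<Sum>k\<le>n. \<Sum>i\<le>k. t k i)"
    by (intro sum.cong refl) (simp add: expand_left t_def sum_distrib_left)
  also have "\<dots> = (\<Sum>j\<le>n. \<Sum>i\<le>n - j. t (i + j) i)"
    by (rule sum_triangle_swap)
  also have "\<dots> = (\<Sum>j\<le>n. \<Sum>i\<le>n - j. pochhammer x j / fact j
      * (pochhammer (x + of_nat j) i * pochhammer (- of_nat (n - j)) i) / (fact i * pochhammer c i))"
    unfolding t_def by (intro sum.cong refl, subst pochhammer_triangle_term) auto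
  also have "\<dots> = (\<Sum>j\<le>n. pochhammer x j / fact j
            * (pochhammer (c - x - of_nat j) (n - j) / pochhammer c (n - j)))"
    by (intro sum.cong refl) (simp add: expand_right sum_distrib_left)
  also have "\<dots> = (\<Sum>k\<le>n. pochhammer x (n - k) / fact (n - k)
            * (pochhammer (c - x - of_nat n + of_nat k) k / pochhammer c k))"
    by (rule sum.reindex_bij_witness[where i="\<lambda>k. n - k" and j="\<lambda>k. n - k"])
      (auto simp: of_nat_diff algebra_simps)
  finally show ?thesis .
qed

lemma pochhammer_reflect:
  fixes c :: "'a::field_char_0"
  assumes "k \<le> n" and "pochhammer c k \<noteq> 0"
  shows "pochhammer (- (c + of_nat n - 1)) (n - k) / fact (n - k)
       = (-1) ^ n * pochhammer c n / fact n * (pochhammer (- of_nat n) k / pochhammer c k)"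
proof -
  have fact_split: "(fact n :: 'a) = fact (n - k) * pochhammer (of_nat (n - k) + 1) k"
    using pochhammer_product'[of "1::'a" "n - k" k] assms(1) by (simp add: pochhammer_fact add_ac)
  then have "pochhammer (of_nat (n - k) + 1 :: 'a) k \<noteq> 0"
    by (metis fact_nonzero mult_zero_right)
  moreover have "pochhammer (- (c + of_nat n - 1)) (n - k)
      = (-1) ^ (n - k) * pochhammer (c + of_nat k) (n - k)"
    using assms(1) pochhammer_minus[of "c + of_nat n - 1" "n - k"] by (simp add: of_nat_diff)
  moreover have "pochhammer c n = pochhammer c k * pochhammer (c + of_nat k) (n - k)"
    using pochhammer_product[OF assms(1)] .
  moreover have "pochhammer (- of_nat n :: 'a) k = (-1) ^ k * pochhammer (of_nat (n - k) + 1) k"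
    using assms(1) pochhammer_minus[of "of_nat n :: 'a" k] by (simp add: of_nat_diff algebra_simps)
  moreover have "(-1 :: 'a) ^ n = (-1) ^ (n - k) * (-1) ^ k"
    using assms(1) by (simp flip: power_add)
  ultimately show ?thesis
    using assms(2) unfolding fact_split by (simp add: field_simps)
qed

theorem mainTheorem11:
  fixes n :: nat and a b :: complex
  assumes "\<not> nonpos_integer (- b - 2 * of_nat n)"
    and "\<not> nonpos_integer (1 - b - of_nat n)"
    and "\<not> nonpos_integer (1 + a - b)"
    and "\<not> nonpos_integer (1 + a + of_nat n)"
    and "pochhammer (1 + a) n \<noteq> 0"
  shows "hypF_trunc [- b / 2 - of_nat n, (1 - b) / 2 - of_nat n, - a - 2 * of_nat n]
                    [- b - 2 * of_nat n, 1 - b - of_nat n] 4 n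
       = (-1) ^ n * pochhammer (1 + a) (2 * n) / (fact n * pochhammer (1 + a) n)
         * hypF [- of_nat n, (1 + a - b) / 2, (2 + a - b) / 2, 1]
                [1 + a - b, 1 - b - of_nat n, 1 + a + of_nat n] 4"
proof -
  define c d where "c = 1 - b - of_nat n" and "d = 1 + a + of_nat n"
  note nonzero = assms(1-4)[THEN pochhammer_nonzero_if_not_nonpos_integer, folded c_def d_def]
  have "hypF_trunc [- b / 2 - of_nat n, (1 - b) / 2 - of_nat n, - a - 2 * of_nat n]
                    [- b - 2 * of_nat n, 1 - b - of_nat n] 4 n
      = hypF_trunc ([] @ [(- b - 2 * of_nat n) / 2, (- b - 2 * of_nat n + 1) / 2] @ [- (d + of_nat n - 1)])
                   ((- b - 2 * of_nat n) # [c]) 4 n"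
    unfolding c_def d_def by (simp add: field_simps)
  also have "\<dots> = (\<Sum>k\<le>n. pochhammer (- (d + of_nat n - 1)) k / fact k
                    * (pochhammer (c - 1 - of_nat n + of_nat k) k / pochhammer c k))"
    unfolding hypF_trunc_def hyp_term_duplication[OF nonzero(1)]
    by (simp add: hyp_term_def c_def algebra_simps)
  also have "\<dots> = (\<Sum>k\<le>n. pochhammer (- (d + of_nat n - 1)) (n - k) / fact (n - k)
                    * (pochhammer (1 + a - b + of_nat k) k / pochhammer c k))"
    using pochhammer_sum_transformation[where n=n and x="- (d + of_nat n - 1)", OF nonzero(2)]
    unfolding c_def d_def by (simp add: algebra_simps)
  also have "\<dots> = (-1) ^ n * pochhammer d n / fact n
      * (\<Sum>k\<le>n. pochhammer (- of_nat n) k / pochhammer d k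
                    * (pochhammer (1 + a - b + of_nat k) k / pochhammer c k))"
    unfolding sum_distrib_left
    by (intro sum.cong refl, subst pochhammer_reflect) (auto simp: nonzero(4) mult_ac)
  also have "(\<Sum>k\<le>n. pochhammer (- of_nat n) k / pochhammer d k
                    * (pochhammer (1 + a - b + of_nat k) k / pochhammer c k))
      = hypF_trunc ([- of_nat n] @ [(1 + a - b) / 2, (1 + a - b + 1) / 2] @ [1])
                   ((1 + a - b) # [c, d]) 4 n"
    unfolding hypF_trunc_def hyp_term_duplication[OF nonzero(3)]
    by (simp add: hyp_term_def mult_ac flip: pochhammer_fact)
  also have "\<dots> = hypF [- of_nat n, (1 + a - b) / 2, (2 + a - b) / 2, 1]
                [1 + a - b, 1 - b - of_nat n, 1 + a + of_nat n] 4"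
    unfolding c_def d_def by (subst hypF_terminating[of n]) (simp_all add: field_simps)
  also have "(-1) ^ n * pochhammer d n / fact n
      = (-1) ^ n * pochhammer (1 + a) (2 * n) / (fact n * pochhammer (1 + a) n)"
    using pochhammer_product'[of "1 + a" n n] assms(5) unfolding d_def by (simp add: mult_2)
  finally show ?thesis .
qed

end
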